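(* Let $\mathcal{H}$ be a complex Hilbert space, $A\in\mathcal{B}(\mathcal{H})$ positive, $S\in\mathcal{B}_A(\mathcal{H})$, and let $m_A(S)=\inf_{\|z\|_A=1}\|Sz\|_A$. Then $$d\omega_A^2(S)\ge\max\left\{\left(1+m_A^2(S)\right)\omega_A^2(S),\ \left(1+\|S\|_A^2\right)c_A^2(S)\right\}.$$
   Context: $\mathcal{B}(\mathcal{H})$ denotes the bounded linear operators on $\mathcal{H}$. For positive $A$, $\langle x,z\rangle_A=\langle Ax,z\rangle$ and $\|z\|_A=\|A^{1/2}z\|$. $\mathcal{B}_A(\mathcal{H})$ is the set of $S\in\mathcal{B}(\mathcal{H})$ for which some $R\in\mathcal{B}(\mathcal{H})$ satisfies $AR=S^*A$. For operators $T$ bounded with respect to $\|\cdot\|_A$: $\|T\|_A=\sup_{\|z\|_A=1}\|Tz\|_A$, $\omega_A(T)=\sup_{\|z\|_A=1}|\langle Tz,z\rangle_A|$, $c_A(T)=\inf_{\|z\|_A=1}|\langle Tz,z\rangle_A|$, and $d\omega_A(T)=\sup_{\|z\|_A=1}(|\langle Tz,z\rangle_A|^2+\|Tz\|_A^4)^{1/2}$. *)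

theory Defs
  imports Complex_Main
begin

definition hnorm :: "('a \<Rightarrow> 'a \<Rightarrow> complex) \<Rightarrow> 'a \<Rightarrow> real" where
  "hnorm ip x = sqrt (Re (ip x x))"

definition is_complex_hilbert ::
  "(complex \<Rightarrow> 'a::ab_group_add \<Rightarrow> 'a) \<Rightarrow> ('a \<Rightarrow> 'a \<Rightarrow> complex) \<Rightarrow> bool" where
  "is_complex_hilbert sc ip \<longleftrightarrow>
     vector_space sc \<and>
     (\<forall>x y z. ip (x + y) z = ip x z + ip y z) \<and>
     (\<forall>c x y. ip (sc c x) y = c * ip x y) \<and>
     (\<forall>x y. ip y x = cnj (ip x y)) \<and>
     (\<forall>x. 0 \<le> Re (ip x x)) \<and>
     (\<forall>x. ip x x = 0 \<longrightarrow> x = 0) \<and>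
     (\<forall>X::nat \<Rightarrow> 'a.
        (\<forall>e>0. \<exists>N. \<forall>m\<ge>N. \<forall>n\<ge>N. hnorm ip (X m - X n) < e) \<longrightarrow>
        (\<exists>l. (\<lambda>n. hnorm ip (X n - l)) \<longlonglongrightarrow> 0))"

definition bounded_op ::
  "(complex \<Rightarrow> 'a::ab_group_add \<Rightarrow> 'a) \<Rightarrow> ('a \<Rightarrow> 'a \<Rightarrow> complex) \<Rightarrow> ('a \<Rightarrow> 'a) \<Rightarrow> bool" where
  "bounded_op sc ip T \<longleftrightarrow> Vector_Spaces.linear sc sc T \<and> (\<exists>C. \<forall>x. hnorm ip (T x) \<le> C * hnorm ip x)"

definition positive_op ::
  "(complex \<Rightarrow> 'a::ab_group_add \<Rightarrow> 'a) \<Rightarrow> ('a \<Rightarrow> 'a \<Rightarrow> complex) \<Rightarrow> ('a \<Rightarrow> 'a) \<Rightarrow> bool" where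
  "positive_op sc ip A \<longleftrightarrow> bounded_op sc ip A \<and> (\<forall>x. Im (ip (A x) x) = 0 \<and> 0 \<le> Re (ip (A x) x))"

text \<open>B_A(H): S in B(H) such that A R = S^* A for some R in B(H). The operator equation
  A R = S^* A is written out via the defining property of the Hilbert adjoint:
  <A R x, y> = <S^* A x, y> = <A x, S y> for all x, y.\<close>
definition BA ::
  "(complex \<Rightarrow> 'a::ab_group_add \<Rightarrow> 'a) \<Rightarrow> ('a \<Rightarrow> 'a \<Rightarrow> complex) \<Rightarrow> ('a \<Rightarrow> 'a) \<Rightarrow> ('a \<Rightarrow> 'a) \<Rightarrow> bool" where
  "BA sc ip A S \<longleftrightarrow> bounded_op sc ip S \<and>
     (\<exists>R. bounded_op sc ip R \<and> (\<forall>x y. ip (A (R x)) y = ip (A x) (S y)))"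

definition ipA :: "('a \<Rightarrow> 'a \<Rightarrow> complex) \<Rightarrow> ('a \<Rightarrow> 'a) \<Rightarrow> 'a \<Rightarrow> 'a \<Rightarrow> complex" where
  "ipA ip A x z = ip (A x) z"

definition normA :: "('a \<Rightarrow> 'a \<Rightarrow> complex) \<Rightarrow> ('a \<Rightarrow> 'a) \<Rightarrow> 'a \<Rightarrow> real" where
  "normA ip A z = sqrt (Re (ipA ip A z z))"

definition opnormA :: "('a \<Rightarrow> 'a \<Rightarrow> complex) \<Rightarrow> ('a \<Rightarrow> 'a) \<Rightarrow> ('a \<Rightarrow> 'a) \<Rightarrow> real" where
  "opnormA ip A T = (SUP z\<in>{z. normA ip A z = 1}. normA ip A (T z))"

definition omegaA :: "('a \<Rightarrow> 'a \<Rightarrow> complex) \<Rightarrow> ('a \<Rightarrow> 'a) \<Rightarrow> ('a \<Rightarrow> 'a) \<Rightarrow> real" where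
  "omegaA ip A T = (SUP z\<in>{z. normA ip A z = 1}. cmod (ipA ip A (T z) z))"

definition cA :: "('a \<Rightarrow> 'a \<Rightarrow> complex) \<Rightarrow> ('a \<Rightarrow> 'a) \<Rightarrow> ('a \<Rightarrow> 'a) \<Rightarrow> real" where
  "cA ip A T = (INF z\<in>{z. normA ip A z = 1}. cmod (ipA ip A (T z) z))"

definition mA :: "('a \<Rightarrow> 'a \<Rightarrow> complex) \<Rightarrow> ('a \<Rightarrow> 'a) \<Rightarrow> ('a \<Rightarrow> 'a) \<Rightarrow> real" where
  "mA ip A T = (INF z\<in>{z. normA ip A z = 1}. normA ip A (T z))"

definition domegaA :: "('a \<Rightarrow> 'a \<Rightarrow> complex) \<Rightarrow> ('a \<Rightarrow> 'a) \<Rightarrow> ('a \<Rightarrow> 'a) \<Rightarrow> real" where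
  "domegaA ip A T = (SUP z\<in>{z. normA ip A z = 1}.
      sqrt ((cmod (ipA ip A (T z) z))\<^sup>2 + (normA ip A (T z)) ^ 4))"

end

theory Submission
  imports Defs
begin

text \<open>By the Cauchy-Schwarz inequality for the semi-inner product \<open><_,_>\<^sub>A\<close>,
  \<open>|<Sz,z>\<^sub>A| \<le> ||Sz||\<^sub>A\<close> on the A-unit sphere. Hence pointwise
  \<open>(1 + m\<^sub>A(S)\<^sup>2) |<Sz,z>\<^sub>A|\<^sup>2\<close> and \<open>(1 + ||Sz||\<^sub>A\<^sup>2) c\<^sub>A(S)\<^sup>2\<close> are both at most
  \<open>|<Sz,z>\<^sub>A|\<^sup>2 + ||Sz||\<^sub>A\<^sup>4\<close>, and taking suprema gives the two bounds.
  The suprema are genuine (Sup of an unbounded set of reals is a junk value) because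
  every \<open>S \<in> B\<^sub>A(H)\<close> is A-bounded: if \<open>A R = S\<^sup>* A\<close>, then \<open>T = R S\<close> is A-selfadjoint,
  so iterating \<open>||Tz||\<^sub>A\<^sup>2 \<le> ||T\<^sup>2z||\<^sub>A ||z||\<^sub>A\<close> gives
  \<open>||Tz||\<^sub>A^(2^k) \<le> ||T^(2^k) z||\<^sub>A \<le> K C^(2^k) ||z||\<close> on the A-unit sphere, where K and C
  come from the ordinary boundedness of A, R and S; this forces \<open>||Tz||\<^sub>A \<le> C\<close>; finally \<open>||Sz||\<^sub>A\<^sup>2 = <Tz,z>\<^sub>A \<le> ||Tz||\<^sub>A\<close>.\<close>

lemma le_mult_if_quadratic_nonneg:
  fixes a b c :: real
  assumes quadratic: "\<And>s. 0 \<le> a - 2 * s * b + s\<^sup>2 * b * c"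
    and "0 \<le> c"
  shows "b \<le> a * c"
proof (cases "c = 0")
  case True
  have "b \<le> 0"
  proof (rule ccontr)
    assume "\<not> b \<le> 0"
    then have "0 < b" by simp
    moreover have "0 \<le> a - 2 * ((a + 1) / (2 * b)) * b"
      using quadratic[of "(a + 1) / (2 * b)"] True by simp
    ultimately show False by (simp add: field_simps)
  qed
  then show ?thesis using True by simp
next
  case False
  with \<open>0 \<le> c\<close> have "0 < c" by simp
  moreover have "0 \<le> a - 2 * (1 / c) * b + (1 / c)\<^sup>2 * b * c"
    by (rule quadratic)
  ultimately show ?thesis by (simp add: field_simps power2_eq_square)
qed

lemma le_if_pow2_pow_le:
  fixes a M K :: real
  assumes "0 < M" and bound: "\<And>k. a ^ 2 ^ k \<le> K * M ^ 2 ^ k"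
  shows "a \<le> M"
proof (rule ccontr)
  assume "\<not> a \<le> M"
  define b where "b = a / M"
  have "0 < b - 1"
    using \<open>\<not> a \<le> M\<close> \<open>0 < M\<close> by (simp add: b_def field_simps)
  then obtain k :: nat where k: "K < real k * (b - 1)"
    using reals_Archimedean3 by blast
  have "1 + real (2 ^ k) * (b - 1) \<le> (1 + (b - 1)) ^ 2 ^ k"
    using \<open>0 < b - 1\<close> by (intro Bernoulli_inequality) simp
  also have "\<dots> = a ^ 2 ^ k / M ^ 2 ^ k"
    by (simp add: b_def power_divide)
  also have "\<dots> \<le> K"
    using bound[of k] \<open>0 < M\<close> by (simp add: divide_le_eq)
  finally have "1 + real (2 ^ k) * (b - 1) \<le> K" .
  moreover have "real k * (b - 1) \<le> real (2 ^ k) * (b - 1)"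
    using \<open>0 < b - 1\<close> less_exp[of k] by (intro mult_right_mono) simp_all
  ultimately show False
    using k by simp
qed

locale hermitian_form =
  fixes sc :: "complex \<Rightarrow> 'a::ab_group_add \<Rightarrow> 'a"
    and B :: "'a \<Rightarrow> 'a \<Rightarrow> complex"
  assumes add_left: "B (x + y) z = B x z + B y z"
    and scale_left: "B (sc c x) y = c * B x y"
    and conj_sym: "B y x = cnj (B x y)"
    and Re_diag_nonneg: "0 \<le> Re (B x x)"
begin

lemma add_right: "B x (y + z) = B x y + B x z"
  by (metis add_left complex_cnj_add conj_sym)

lemma scale_right: "B x (sc c y) = cnj c * B x y"
  by (metis complex_cnj_mult conj_sym scale_left)

lemma diag_real: "B x x = of_real (Re (B x x))"
  using conj_sym[of x x] by (simp add: complex_eq_iff)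

lemma hnorm_nonneg: "0 \<le> hnorm B x"
  by (simp add: hnorm_def Re_diag_nonneg)

lemma power2_hnorm: "(hnorm B x)\<^sup>2 = Re (B x x)"
  by (simp add: hnorm_def Re_diag_nonneg)

lemma hnorm_scale_real: "hnorm B (sc (of_real r) x) = \<bar>r\<bar> * hnorm B x"
proof -
  have "B (sc (of_real r) x) (sc (of_real r) x) = of_real (r\<^sup>2) * B x x"
    by (simp add: scale_left scale_right power2_eq_square)
  then show ?thesis
    by (simp add: hnorm_def real_sqrt_mult)
qed

lemma ex_hnorm_eq_1:
  assumes "hnorm B x \<noteq> 0"
  shows "\<exists>z. hnorm B z = 1"
proof
  show "hnorm B (sc (of_real (1 / hnorm B x)) x) = 1"
    using assms hnorm_nonneg[of x] hnorm_scale_real[of "1 / hnorm B x" x] by simp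
qed

lemma cauchy_schwarz: "cmod (B x y) \<le> hnorm B x * hnorm B y"
proof -
  define b where "b = B x y"
  have expand: "Re (B (x + sc (- of_real s * b) y) (x + sc (- of_real s * b) y))
      = Re (B x x) - 2 * s * (cmod b)\<^sup>2 + s\<^sup>2 * (cmod b)\<^sup>2 * Re (B y y)" for s
  proof -
    have "B (x + sc (- of_real s * b) y) (x + sc (- of_real s * b) y)
        = B x x - of_real s * (b * cnj b) - of_real s * (b * cnj b)
          + of_real (s\<^sup>2) * (b * cnj b) * B y y"
      using conj_sym[of x y]
      by (simp add: add_left add_right scale_left scale_right b_def algebra_simps power2_eq_square)
    also have "\<dots> = of_real (Re (B x x) - 2 * s * (cmod b)\<^sup>2 + s\<^sup>2 * (cmod b)\<^sup>2 * Re (B y y))"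
      by (subst (1 2) diag_real) (simp add: complex_norm_square[symmetric])
    finally show ?thesis by simp
  qed
  have "(cmod b)\<^sup>2 \<le> Re (B x x) * Re (B y y)"
    using Re_diag_nonneg by (intro le_mult_if_quadratic_nonneg) (simp_all flip: expand)
  then have "cmod b \<le> sqrt (Re (B x x) * Re (B y y))"
    by (simp add: real_le_rsqrt)
  then show ?thesis
    by (simp add: b_def hnorm_def real_sqrt_mult)
qed

lemma hnorm_iterate_pow2_le:
  assumes "\<And>x y. B (T x) y = B x (T y)"
  shows "hnorm B (T z) ^ 2 ^ k \<le> hnorm B ((T ^^ 2 ^ k) z) * hnorm B z ^ (2 ^ k - 1)"
  using assms
proof (induction k arbitrary: T)
  case 0
  then show ?case by simp
next
  case (Suc k)
  have "hnorm B (T z) ^ 2 = Re (B (T (T z)) z)"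
    by (simp add: power2_hnorm Suc.prems)
  also have "\<dots> \<le> hnorm B (T (T z)) * hnorm B z"
    using complex_Re_le_cmod cauchy_schwarz order_trans by blast
  finally have square: "hnorm B (T z) ^ 2 \<le> hnorm B ((T \<circ> T) z) * hnorm B z"
    by simp
  have IH: "hnorm B ((T \<circ> T) z) ^ 2 ^ k \<le> hnorm B (((T \<circ> T) ^^ 2 ^ k) z) * hnorm B z ^ (2 ^ k - 1)"
    using Suc.prems by (intro Suc.IH) simp
  have "hnorm B (T z) ^ 2 ^ Suc k = (hnorm B (T z) ^ 2) ^ 2 ^ k"
    by (simp flip: power_mult add: mult.commute)
  also have "\<dots> \<le> hnorm B ((T \<circ> T) z) ^ 2 ^ k * hnorm B z ^ 2 ^ k"
    using square hnorm_nonneg by (simp flip: power_mult_distrib add: power_mono)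
  also have "\<dots> \<le> hnorm B (((T \<circ> T) ^^ 2 ^ k) z) * hnorm B z ^ (2 ^ k - 1) * hnorm B z ^ 2 ^ k"
    using IH hnorm_nonneg by (simp add: mult_right_mono)
  also have "\<dots> = hnorm B ((T ^^ 2 ^ Suc k) z) * hnorm B z ^ (2 ^ Suc k - 1)"
  proof -
    have "T \<circ> T = T ^^ 2"
      by (simp add: numeral_2_eq_2)
    then have "(T \<circ> T) ^^ 2 ^ k = T ^^ (2 * 2 ^ k)"
      by (simp only: funpow_mult)
    moreover have "(2::nat) ^ k - 1 + 2 ^ k = 2 ^ Suc k - 1"
      using one_le_power[of "2::nat" k] by simp
    ultimately show ?thesis
      by (simp add: mult.assoc flip: power_add)
  qed
  finally show ?case .
qed

lemma comp_symmetric_if_adjoint: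
  assumes adj: "\<And>x y. B (R x) y = B x (S y)"
  shows "B ((R \<circ> S) x) y = B x ((R \<circ> S) y)"
proof -
  have "B ((R \<circ> S) x) y = cnj (B (S y) (S x))"
    using conj_sym[of "S x" "S y"] by (simp add: adj)
  also have "\<dots> = B x ((R \<circ> S) y)"
    using conj_sym[of "R (S y)" x] by (simp add: adj)
  finally show ?thesis .
qed

lemma hnorm_le_if_symmetric_pow_bounded:
  assumes sym: "\<And>x y. B (T x) y = B x (T y)" and "0 < C"
    and pow_bound: "\<And>n. hnorm B ((T ^^ n) z) \<le> K * C ^ n"
    and "hnorm B z = 1"
  shows "hnorm B (T z) \<le> C"
  using \<open>0 < C\<close>
proof (rule le_if_pow2_pow_le)
  fix k :: nat
  have "hnorm B (T z) ^ 2 ^ k \<le> hnorm B ((T ^^ 2 ^ k) z)"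
    using hnorm_iterate_pow2_le[OF sym, of z k] \<open>hnorm B z = 1\<close> by simp
  also have "\<dots> \<le> K * C ^ 2 ^ k"
    by (rule pow_bound)
  finally show "hnorm B (T z) ^ 2 ^ k \<le> K * C ^ 2 ^ k" .
qed

end

lemma conj_sym_if_Im_diag_eq_0:
  fixes B :: "'a::ab_group_add \<Rightarrow> 'a \<Rightarrow> complex" and sc :: "complex \<Rightarrow> 'a \<Rightarrow> 'a"
  assumes add_left: "\<And>x y z. B (x + y) z = B x z + B y z"
    and add_right: "\<And>x y z. B x (y + z) = B x y + B x z"
    and scale_left: "\<And>c x y. B (sc c x) y = c * B x y"
    and scale_right: "\<And>c x y. B x (sc c y) = cnj c * B x y"
    and Im_diag: "\<And>x. Im (B x x) = 0"
  shows "B y x = cnj (B x y)"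
proof -
  have "B (x + y) (x + y) = B x x + B x y + B y x + B y y"
    by (simp add: add_left add_right)
  then have "Im (B x y) + Im (B y x) = 0"
    using Im_diag[of "x + y"] Im_diag[of x] Im_diag[of y] by simp
  moreover have "B (x + sc \<i> y) (x + sc \<i> y) = B x x - \<i> * B x y + \<i> * B y x + B y y"
    by (simp add: add_left add_right scale_left scale_right algebra_simps)
  then have "Re (B y x) - Re (B x y) = 0"
    using Im_diag[of "x + sc \<i> y"] Im_diag[of x] Im_diag[of y] by simp
  ultimately show ?thesis
    by (simp add: complex_eq_iff)
qed

lemma hermitian_form_ip:
  assumes "is_complex_hilbert sc ip"
  shows "hermitian_form sc ip"
proof -
  have "(\<forall>x y z. ip (x + y) z = ip x z + ip y z) \<and> (\<forall>c x y. ip (sc c x) y = c * ip x y) \<and>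
      (\<forall>x y. ip y x = cnj (ip x y)) \<and> (\<forall>x. 0 \<le> Re (ip x x))"
    using assms unfolding is_complex_hilbert_def by (elim conjE) (intro conjI; assumption)
  then show ?thesis
    by unfold_locales blast+
qed

lemma hermitian_form_ipA:
  assumes "is_complex_hilbert sc ip" and "positive_op sc ip A"
  shows "hermitian_form sc (ipA ip A)"
proof -
  interpret ip: hermitian_form sc ip
    using assms(1) by (rule hermitian_form_ip)
  have "Vector_Spaces.linear sc sc A"
    using assms(2) by (simp add: positive_op_def bounded_op_def)
  then have A_add: "A (x + y) = A x + A y" and A_scale: "A (sc c x) = sc c (A x)" for x y c
    by (simp_all add: Vector_Spaces.linear_iff)
  have add_left: "ipA ip A (x + y) z = ipA ip A x z + ipA ip A y z" for x y z
    by (simp add: ipA_def A_add ip.add_left)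
  have scale_left: "ipA ip A (sc c x) y = c * ipA ip A x y" for c x y
    by (simp add: ipA_def A_scale ip.scale_left)
  have "ipA ip A y x = cnj (ipA ip A x y)" for x y
  proof (rule conj_sym_if_Im_diag_eq_0[OF add_left _ scale_left])
    show "ipA ip A x (y + z) = ipA ip A x y + ipA ip A x z" for x y z
      by (simp add: ipA_def ip.add_right)
    show "ipA ip A x (sc c y) = cnj c * ipA ip A x y" for c x y
      by (simp add: ipA_def ip.scale_right)
    show "Im (ipA ip A x x) = 0" for x
      using assms(2) by (simp add: positive_op_def ipA_def)
  qed
  moreover have "0 \<le> Re (ipA ip A x x)" for x
    using assms(2) by (simp add: positive_op_def ipA_def)
  ultimately show ?thesis
    using add_left scale_left by unfold_locales
qed

lemma is_complex_hilbert_definite: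
  assumes "is_complex_hilbert sc ip" and "ip x x = 0"
  shows "x = 0"
  using assms unfolding is_complex_hilbert_def by blast

lemma normA_eq_hnorm_ipA: "normA ip A = hnorm (ipA ip A)"
  by (simp add: fun_eq_iff normA_def hnorm_def)

lemma A_eq_0_if_normA_eq_0:
  assumes "is_complex_hilbert sc ip" and "positive_op sc ip A" and "normA ip A x = 0"
  shows "A x = 0"
proof -
  interpret hermitian_form sc "ipA ip A"
    using assms(1,2) by (rule hermitian_form_ipA)
  have "cmod (ip (A x) (A x)) = 0"
    using cauchy_schwarz[of x "A x"] assms(3) by (simp add: ipA_def normA_eq_hnorm_ipA)
  then show ?thesis
    using assms(1) by (auto intro: is_complex_hilbert_definite)
qed

lemma ex_normA_eq_1:
  assumes "is_complex_hilbert sc ip" and "positive_op sc ip A" and "A x \<noteq> 0"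
  shows "\<exists>z. normA ip A z = 1"
proof -
  interpret hermitian_form sc "ipA ip A"
    using assms(1,2) by (rule hermitian_form_ipA)
  have "hnorm (ipA ip A) x \<noteq> 0"
    using A_eq_0_if_normA_eq_0[OF assms(1,2)] assms(3) by (auto simp: normA_eq_hnorm_ipA)
  then show ?thesis
    unfolding normA_eq_hnorm_ipA by (rule ex_hnorm_eq_1)
qed

lemma bounded_op_pos_bound:
  assumes "is_complex_hilbert sc ip" and "bounded_op sc ip T"
  obtains C where "0 < C" and "\<And>x. hnorm ip (T x) \<le> C * hnorm ip x"
proof -
  interpret hermitian_form sc ip
    using assms(1) by (rule hermitian_form_ip)
  obtain C where C: "\<And>x. hnorm ip (T x) \<le> C * hnorm ip x"
    using assms(2) by (auto simp: bounded_op_def)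
  have "hnorm ip (T x) \<le> max C 1 * hnorm ip x" for x
    using C[of x] hnorm_nonneg[of x] by (meson max.cobounded1 mult_right_mono order_trans)
  then show ?thesis
    using that[of "max C 1"] by simp
qed

lemma funpow_bound:
  fixes N :: "'a \<Rightarrow> real"
  assumes "\<And>x. N (T x) \<le> C * N x" and "0 \<le> C"
  shows "N ((T ^^ n) x) \<le> C ^ n * N x"
proof (induction n)
  case 0
  then show ?case by simp
next
  case (Suc n)
  have "N ((T ^^ Suc n) x) \<le> C * N ((T ^^ n) x)"
    using assms(1) by simp
  also have "\<dots> \<le> C * (C ^ n * N x)"
    using Suc assms(2) by (rule mult_left_mono)
  finally show ?case
    by (simp add: mult.assoc)
qed

lemma normA_le_hnorm:
  assumes "is_complex_hilbert sc ip" and "positive_op sc ip A"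
  obtains K where "0 \<le> K" and "\<And>x. normA ip A x \<le> K * hnorm ip x"
proof -
  interpret ip: hermitian_form sc ip
    using assms(1) by (rule hermitian_form_ip)
  have "bounded_op sc ip A"
    using assms(2) by (simp add: positive_op_def)
  then obtain C where "0 < C" and C: "\<And>x. hnorm ip (A x) \<le> C * hnorm ip x"
    using assms(1) bounded_op_pos_bound by blast
  have "normA ip A x \<le> sqrt C * hnorm ip x" for x
  proof -
    have "Re (ip (A x) x) \<le> hnorm ip (A x) * hnorm ip x"
      using complex_Re_le_cmod ip.cauchy_schwarz order_trans by blast
    also have "\<dots> \<le> C * (hnorm ip x)\<^sup>2"
      using mult_right_mono[OF C ip.hnorm_nonneg, of x x] by (simp add: power2_eq_square mult.assoc)
    finally have "normA ip A x \<le> sqrt (C * (hnorm ip x)\<^sup>2)"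
      by (simp add: normA_def ipA_def)
    then show ?thesis
      using ip.hnorm_nonneg[of x] by (simp add: real_sqrt_mult)
  qed
  then show ?thesis
    using that[of "sqrt C"] \<open>0 < C\<close> by simp
qed

lemma BA_normA_bounded:
  assumes "is_complex_hilbert sc ip" and "positive_op sc ip A" and "BA sc ip A S"
  obtains M where "\<And>z. normA ip A z = 1 \<Longrightarrow> normA ip A (S z) \<le> M"
proof -
  interpret hermitian_form sc "ipA ip A"
    using assms(1,2) by (rule hermitian_form_ipA)
  obtain R where "bounded_op sc ip R" and adj: "\<And>x y. ipA ip A (R x) y = ipA ip A x (S y)"
    using assms(3) by (auto simp: BA_def ipA_def)
  obtain CR where "0 < CR" and CR: "\<And>x. hnorm ip (R x) \<le> CR * hnorm ip x"
    using bounded_op_pos_bound[OF assms(1) \<open>bounded_op sc ip R\<close>] by blast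
  obtain CS where "0 < CS" and CS: "\<And>x. hnorm ip (S x) \<le> CS * hnorm ip x"
    using assms(3) bounded_op_pos_bound[OF assms(1)] by (auto simp: BA_def)
  obtain K where "0 \<le> K" and K: "\<And>x. normA ip A x \<le> K * hnorm ip x"
    using normA_le_hnorm[OF assms(1,2)] by blast
  define T where "T = R \<circ> S"
  define C where "C = CR * CS"
  have "0 < C"
    using \<open>0 < CR\<close> \<open>0 < CS\<close> by (simp add: C_def)
  have T_sym: "ipA ip A (T x) y = ipA ip A x (T y)" for x y
    unfolding T_def using adj by (rule comp_symmetric_if_adjoint)
  have "hnorm ip (T x) \<le> C * hnorm ip x" for x
    using CR[of "S x"] mult_left_mono[OF CS \<open>0 < CR\<close>[THEN less_imp_le], of x]
    by (simp add: T_def C_def mult.assoc)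
  then have T_pow: "hnorm ip ((T ^^ n) x) \<le> C ^ n * hnorm ip x" for n x
    using \<open>0 < C\<close> by (intro funpow_bound) simp_all
  have T_bound: "normA ip A (T z) \<le> C" if "normA ip A z = 1" for z
    unfolding normA_eq_hnorm_ipA
  proof (rule hnorm_le_if_symmetric_pow_bounded[OF T_sym \<open>0 < C\<close>])
    show "hnorm (ipA ip A) ((T ^^ n) z) \<le> K * hnorm ip z * C ^ n" for n
      using K[of "(T ^^ n) z"] mult_left_mono[OF T_pow \<open>0 \<le> K\<close>, of n z]
      by (simp add: normA_eq_hnorm_ipA ac_simps)
    show "hnorm (ipA ip A) z = 1"
      using that by (simp add: normA_eq_hnorm_ipA)
  qed
  have "normA ip A (S z) \<le> sqrt C" if "normA ip A z = 1" for z
  proof -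
    have "(normA ip A (S z))\<^sup>2 = Re (ipA ip A (T z) z)"
      by (simp add: normA_eq_hnorm_ipA power2_hnorm T_def adj)
    also have "\<dots> \<le> normA ip A (T z) * normA ip A z"
      unfolding normA_eq_hnorm_ipA using complex_Re_le_cmod cauchy_schwarz order_trans by blast
    also have "\<dots> \<le> C"
      using T_bound that by simp
    finally show ?thesis
      by (simp add: real_le_rsqrt)
  qed
  then show ?thesis
    by (rule that)
qed

lemma power2_SUP_le:
  fixes f :: "'b \<Rightarrow> real"
  assumes "U \<noteq> {}" and "\<And>z. z \<in> U \<Longrightarrow> 0 \<le> f z" and "\<And>z. z \<in> U \<Longrightarrow> (f z)\<^sup>2 \<le> K"
  shows "(SUP z\<in>U. f z)\<^sup>2 \<le> K"
proof -
  obtain z0 where "z0 \<in> U"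
    using assms(1) by blast
  have f_le: "f z \<le> sqrt K" if "z \<in> U" for z
    using assms(3)[OF that] by (simp add: real_le_rsqrt)
  then have "0 \<le> (SUP z\<in>U. f z)"
    using assms(2)[OF \<open>z0 \<in> U\<close>] \<open>z0 \<in> U\<close>
    by (intro cSUP_upper2[where x = z0] bdd_aboveI2[where M = "sqrt K"]) auto
  moreover have "(SUP z\<in>U. f z) \<le> sqrt K"
    using assms(1) f_le by (rule cSUP_least)
  moreover have "0 \<le> K"
    using assms(3)[OF \<open>z0 \<in> U\<close>] by (meson order_trans zero_le_power2)
  ultimately show ?thesis
    by (metis power_mono real_sqrt_pow2)
qed

context
  fixes U :: "'b set" and g h :: "'b \<Rightarrow> real"
  assumes U_ne: "U \<noteq> {}"
    and g_nonneg: "\<And>z. z \<in> U \<Longrightarrow> 0 \<le> g z"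
    and g_le_h: "\<And>z. z \<in> U \<Longrightarrow> g z \<le> h z"
    and h_bdd: "bdd_above (h ` U)"
begin

lemma sum_power_le_SUP_sum_power:
  assumes "z \<in> U"
  shows "(g z)\<^sup>2 + (h z)^4 \<le> (SUP z\<in>U. sqrt ((g z)\<^sup>2 + (h z)^4))\<^sup>2"
proof -
  obtain M where M: "\<And>z. z \<in> U \<Longrightarrow> h z \<le> M"
    using h_bdd by (auto simp: bdd_above_def)
  have "sqrt ((g z)\<^sup>2 + (h z)^4) \<le> sqrt (M\<^sup>2 + M^4)" if "z \<in> U" for z
    using g_nonneg g_le_h M that
    by (smt (verit) power_mono real_sqrt_le_mono)
  then have "bdd_above ((\<lambda>z. sqrt ((g z)\<^sup>2 + (h z)^4)) ` U)"
    by (rule bdd_aboveI2)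
  with assms have "sqrt ((g z)\<^sup>2 + (h z)^4) \<le> (SUP z\<in>U. sqrt ((g z)\<^sup>2 + (h z)^4))"
    by (rule cSUP_upper)
  then have "(sqrt ((g z)\<^sup>2 + (h z)^4))\<^sup>2 \<le> (SUP z\<in>U. sqrt ((g z)\<^sup>2 + (h z)^4))\<^sup>2"
    by (rule power_mono) simp
  then show ?thesis
    by simp
qed

lemma SUP_sum_power_ge_SUP_mult:
  "(1 + (INF z\<in>U. h z)\<^sup>2) * (SUP z\<in>U. g z)\<^sup>2 \<le> (SUP z\<in>U. sqrt ((g z)\<^sup>2 + (h z)^4))\<^sup>2"
proof -
  define m where "m = (INF z\<in>U. h z)"
  define D where "D = (SUP z\<in>U. sqrt ((g z)\<^sup>2 + (h z)^4))"
  have h_nonneg: "0 \<le> h z" if "z \<in> U" for z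
    using g_nonneg[OF that] g_le_h[OF that] by (rule order_trans)
  then have "0 \<le> m"
    unfolding m_def using U_ne by (intro cINF_greatest) auto
  have m_le: "m \<le> h z" if "z \<in> U" for z
    unfolding m_def using that h_nonneg by (intro cINF_lower bdd_belowI2) auto
  have "(g z)\<^sup>2 \<le> D\<^sup>2 / (1 + m\<^sup>2)" if "z \<in> U" for z
  proof -
    have "m\<^sup>2 * (g z)\<^sup>2 \<le> (h z)\<^sup>2 * (h z)\<^sup>2"
      using \<open>0 \<le> m\<close> m_le g_nonneg g_le_h that by (intro mult_mono power_mono) auto
    then have "(1 + m\<^sup>2) * (g z)\<^sup>2 \<le> (g z)\<^sup>2 + (h z)^4"
      by (simp add: algebra_simps flip: power_add)
    also have "\<dots> \<le> D\<^sup>2"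
      unfolding D_def using that by (rule sum_power_le_SUP_sum_power)
    finally show ?thesis
      by (simp add: field_simps add_pos_nonneg)
  qed
  then have "(SUP z\<in>U. g z)\<^sup>2 \<le> D\<^sup>2 / (1 + m\<^sup>2)"
    using U_ne g_nonneg by (intro power2_SUP_le)
  then show ?thesis
    unfolding D_def[symmetric] m_def[symmetric] by (simp add: field_simps add_pos_nonneg)
qed

lemma SUP_sum_power_ge_INF_mult:
  "(1 + (SUP z\<in>U. h z)\<^sup>2) * (INF z\<in>U. g z)\<^sup>2 \<le> (SUP z\<in>U. sqrt ((g z)\<^sup>2 + (h z)^4))\<^sup>2"
proof -
  define c where "c = (INF z\<in>U. g z)"
  define D where "D = (SUP z\<in>U. sqrt ((g z)\<^sup>2 + (h z)^4))"
  have "0 \<le> c"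
    unfolding c_def using U_ne g_nonneg by (intro cINF_greatest) auto
  have c_le: "c \<le> g z" if "z \<in> U" for z
    unfolding c_def using that g_nonneg by (intro cINF_lower bdd_belowI2) auto
  show ?thesis
  proof (cases "c = 0")
    case True
    then show ?thesis
      by (simp add: c_def)
  next
    case False
    with \<open>0 \<le> c\<close> have "0 < c" by simp
    have "(h z)\<^sup>2 \<le> D\<^sup>2 / c\<^sup>2 - 1" if "z \<in> U" for z
    proof -
      have "c \<le> h z"
        using c_le[OF that] g_le_h[OF that] by (rule order_trans)
      have "c\<^sup>2 \<le> (g z)\<^sup>2"
        using \<open>0 \<le> c\<close> c_le that by (intro power_mono) auto
      moreover have "c\<^sup>2 * (h z)\<^sup>2 \<le> (h z)\<^sup>2 * (h z)\<^sup>2"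
        using \<open>0 \<le> c\<close> \<open>c \<le> h z\<close> by (intro mult_right_mono power_mono) auto
      ultimately
      have "c\<^sup>2 * (1 + (h z)\<^sup>2) \<le> (g z)\<^sup>2 + (h z)^4"
        by (simp add: algebra_simps flip: power_add)
      also have "\<dots> \<le> D\<^sup>2"
        unfolding D_def using that by (rule sum_power_le_SUP_sum_power)
      finally show ?thesis
        using \<open>0 < c\<close> by (simp add: field_simps)
    qed
    then have "(SUP z\<in>U. h z)\<^sup>2 \<le> D\<^sup>2 / c\<^sup>2 - 1"
      using U_ne g_nonneg g_le_h by (intro power2_SUP_le) (auto intro: order_trans[of 0 "g _"])
    then show ?thesis
      unfolding D_def[symmetric] c_def[symmetric] using \<open>0 < c\<close> by (simp add: field_simps)
  qed
qed

end

theorem theorem2p29: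
  fixes sc :: "complex \<Rightarrow> 'a::ab_group_add \<Rightarrow> 'a"
    and ip :: "'a \<Rightarrow> 'a \<Rightarrow> complex"
    and A S :: "'a \<Rightarrow> 'a"
  assumes "is_complex_hilbert sc ip"
    and "positive_op sc ip A"
    and "\<exists>x. A x \<noteq> 0"
    and "BA sc ip A S"
  shows "(domegaA ip A S)\<^sup>2 \<ge>
           max ((1 + (mA ip A S)\<^sup>2) * (omegaA ip A S)\<^sup>2)
               ((1 + (opnormA ip A S)\<^sup>2) * (cA ip A S)\<^sup>2)"
proof -
  interpret hermitian_form sc "ipA ip A"
    using assms(1,2) by (rule hermitian_form_ipA)
  define U where "U = {z. normA ip A z = 1}"
  define g where "g z = cmod (ipA ip A (S z) z)" for z
  define h where "h z = normA ip A (S z)" for z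
  have "U \<noteq> {}"
    using assms(3) ex_normA_eq_1[OF assms(1,2)] by (auto simp: U_def)
  have g_nonneg: "0 \<le> g z" for z
    by (simp add: g_def)
  have g_le_h: "g z \<le> h z" if "z \<in> U" for z
    using cauchy_schwarz[of "S z" z] that by (simp add: g_def h_def U_def normA_eq_hnorm_ipA)
  obtain M where "\<And>z. z \<in> U \<Longrightarrow> h z \<le> M"
    using BA_normA_bounded[OF assms(1,2,4)] by (auto simp: U_def h_def)
  then have "bdd_above (h ` U)"
    by (rule bdd_aboveI2)
  note bounds = SUP_sum_power_ge_SUP_mult SUP_sum_power_ge_INF_mult
  show ?thesis
    using bounds[OF \<open>U \<noteq> {}\<close> g_nonneg g_le_h \<open>bdd_above (h ` U)\<close>]
    by (simp add: domegaA_def omegaA_def cA_def mA_def opnormA_def U_def g_def h_def)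
qed

end
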